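(* Let $X_1,\dots,X_p$ be attributes with finite domains $D_i=\{x_i^1,\dots,x_i^{q_i}\}$, $C$ a candidate database, $\pi$ a target distribution, $k\in\{1,\dots,|C|\}$, and $A\subseteq C$ a committee with $|A|=k$. Form the binary instance: for each $i\le p$ and $j\le q_i$ a binary attribute $X_{i,j}$ with domain $\{0,1\}$; for each candidate $c\in C$ a new candidate $c'$ with $X_{i,j}(c')=1$ if $X_i(c)=x_i^j$ and $X_{i,j}(c')=0$ otherwise; target $\pi_{\mathrm{new}}$ given by $\pi_{i,j}^1=\pi_i^j$ and $\pi_{i,j}^0=1-\pi_i^j$; and $A_{\mathrm{new}}=\{c':c\in A\}$. Then (1) $\|\pi_{\mathrm{new}},r(A_{\mathrm{new}})\|_1=2\|\pi,r(A)\|_1$; (2) if $\|\pi,r(A)\|_{1,\max}\neq 0$, then $1\le \dfrac{\|\pi_{\mathrm{new}},r(A_{\mathrm{new}})\|_{1,\max}}{\|\pi,r(A)\|_{1,\max}}\le \max_i|D_i|$; (3) $\|\pi_{\mathrm{new}},r(A_{\mathrm{new}})\|_{\max}=\|\pi,r(A)\|_{\max}$.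
   Context: A candidate database is a finite set $C$ in which each candidate $c$ has a value vector $(X_1(c),\dots,X_p(c))\in D_1\times\dots\times D_p$ (different candidates may share a vector). A target distribution is $\pi=(\pi_1,\dots,\pi_p)$ with $\pi_i=(\pi_i^1,\dots,\pi_i^{q_i})$ nonnegative reals summing to $1$. For a committee $A$ of size $k$, $r_i^j(A)=|\{c\in A: X_i(c)=x_i^j\}|/k$ (and analogously for the binary instance, indexing values of $X_{i,j}$ by $0,1$). Loss functions: $\|\pi,r(A)\|_1=\sum_{i,j}|r_i^j(A)-\pi_i^j|$; $\|\pi,r(A)\|_{1,\max}=\sum_i\max_j|r_i^j(A)-\pi_i^j|$; $\|\pi,r(A)\|_{\max}=\max_{i,j}|r_i^j(A)-\pi_i^j|$. *)

theory Defs
  imports Complex_Main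
begin

(* An instance: attributes indexed by a set I of type 'i; attribute i has domain
   {x_i^0, ..., x_i^(q i - 1)}, values represented by their index j < q i. *)

definition ratio :: "('c \<Rightarrow> 'i \<Rightarrow> nat) \<Rightarrow> nat \<Rightarrow> 'c set \<Rightarrow> 'i \<Rightarrow> nat \<Rightarrow> real" where
  "ratio X k A i j = real (card {c \<in> A. X c i = j}) / real k"

definition loss_1 ::
  "'i set \<Rightarrow> ('i \<Rightarrow> nat) \<Rightarrow> ('i \<Rightarrow> nat \<Rightarrow> real) \<Rightarrow> ('c \<Rightarrow> 'i \<Rightarrow> nat) \<Rightarrow> nat \<Rightarrow> 'c set \<Rightarrow> real" where
  "loss_1 I q tgt X k A = (\<Sum>i\<in>I. \<Sum>j<q i. \<bar>ratio X k A i j - tgt i j\<bar>)"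

definition loss_1max ::
  "'i set \<Rightarrow> ('i \<Rightarrow> nat) \<Rightarrow> ('i \<Rightarrow> nat \<Rightarrow> real) \<Rightarrow> ('c \<Rightarrow> 'i \<Rightarrow> nat) \<Rightarrow> nat \<Rightarrow> 'c set \<Rightarrow> real" where
  "loss_1max I q tgt X k A = (\<Sum>i\<in>I. Max ((\<lambda>j. \<bar>ratio X k A i j - tgt i j\<bar>) ` {..<q i}))"

definition loss_max ::
  "'i set \<Rightarrow> ('i \<Rightarrow> nat) \<Rightarrow> ('i \<Rightarrow> nat \<Rightarrow> real) \<Rightarrow> ('c \<Rightarrow> 'i \<Rightarrow> nat) \<Rightarrow> nat \<Rightarrow> 'c set \<Rightarrow> real" where
  "loss_max I q tgt X k A = Max ((\<lambda>(i, j). \<bar>ratio X k A i j - tgt i j\<bar>) ` (SIGMA i:I. {..<q i}))"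

(* Original attributes are 0..p-1. New attributes are pairs (i,j),
   i < p, j < q i, with domain {0,1} (value index 0 means 0, index 1 means 1).
   New candidate c' is represented by the same label c (the map c \<mapsto> c' is a bijection),
   so A_new corresponds to A itself. *)

definition bin_attrs :: "nat \<Rightarrow> (nat \<Rightarrow> nat) \<Rightarrow> (nat \<times> nat) set" where
  "bin_attrs p q = (SIGMA i:{..<p}. {..<q i})"

definition bin_q :: "nat \<times> nat \<Rightarrow> nat" where
  "bin_q ij = 2"

definition bin_X :: "('c \<Rightarrow> nat \<Rightarrow> nat) \<Rightarrow> 'c \<Rightarrow> nat \<times> nat \<Rightarrow> nat" where
  "bin_X X c ij = (if X c (fst ij) = snd ij then 1 else 0)"

definition bin_pi :: "(nat \<Rightarrow> nat \<Rightarrow> real) \<Rightarrow> nat \<times> nat \<Rightarrow> nat \<Rightarrow> real" where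
  "bin_pi tgt ij v = (if v = 1 then tgt (fst ij) (snd ij) else 1 - tgt (fst ij) (snd ij))"

end

theory Submission
  imports Defs
begin

text \<open>Each binary attribute \<open>X\<^sub>i\<^sub>,\<^sub>j\<close> has ratios \<open>r\<^sub>i\<^sup>j\<close> and \<open>1 - r\<^sub>i\<^sup>j\<close> against targets
  \<open>\<pi>\<^sub>i\<^sup>j\<close> and \<open>1 - \<pi>\<^sub>i\<^sup>j\<close>, so both of its values deviate from their target by exactly
  \<open>|r\<^sub>i\<^sup>j - \<pi>\<^sub>i\<^sup>j|\<close>. Summing all deviations therefore doubles the 1-loss, the largest
  deviation is unchanged, and the (1,max)-loss of the binary instance equals the 1-loss of the
  original one. The latter lies between the original (1,max)-loss and \<open>max\<^sub>i |D\<^sub>i|\<close> times it,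
  since a sum of \<open>|D\<^sub>i|\<close> nonnegative terms lies between their maximum and \<open>|D\<^sub>i|\<close> times it.\<close>

lemma image_case_prod_times:
  assumes "b \<in> B"
  shows "(\<lambda>(x, y). f x) ` (A \<times> B) = f ` A"
  using assms by (auto simp: image_iff)

lemma Max_abs_image_nonneg:
  fixes f :: "nat \<Rightarrow> 'a::linordered_idom"
  assumes "0 < n"
  shows "0 \<le> Max ((\<lambda>j. \<bar>f j\<bar>) ` {..<n})"
proof -
  have "\<bar>f 0\<bar> \<le> Max ((\<lambda>j. \<bar>f j\<bar>) ` {..<n})"
    using assms by (intro Max_ge) auto
  then show ?thesis
    by (rule order_trans[OF abs_ge_zero])
qed

lemma Max_abs_image_le_sum:
  fixes f :: "nat \<Rightarrow> 'a::linordered_idom"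
  assumes "0 < n"
  shows "Max ((\<lambda>j. \<bar>f j\<bar>) ` {..<n}) \<le> (\<Sum>j<n. \<bar>f j\<bar>)"
  using assms by (subst Max_le_iff) (auto intro: member_le_sum)

lemma sum_abs_le_mul_Max:
  fixes f :: "nat \<Rightarrow> 'a::linordered_idom"
  assumes "0 < n" and "n \<le> m"
  shows "(\<Sum>j<n. \<bar>f j\<bar>) \<le> of_nat m * Max ((\<lambda>j. \<bar>f j\<bar>) ` {..<n})"
proof -
  have "(\<Sum>j<n. \<bar>f j\<bar>) \<le> of_nat n * Max ((\<lambda>j. \<bar>f j\<bar>) ` {..<n})"
    using sum_bounded_above[of "{..<n}" "\<lambda>j. \<bar>f j\<bar>" "Max ((\<lambda>j. \<bar>f j\<bar>) ` {..<n})"] by simp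
  also have "\<dots> \<le> of_nat m * Max ((\<lambda>j. \<bar>f j\<bar>) ` {..<n})"
    using assms by (intro mult_right_mono Max_abs_image_nonneg) simp_all
  finally show ?thesis .
qed

lemma ratio_bin_X_one: "ratio (bin_X X) k A (i, j) 1 = ratio X k A i j"
  unfolding ratio_def bin_X_def
  by (rule arg_cong[where f = "\<lambda>S. real (card S) / real k"]) auto

lemma ratio_bin_X_zero:
  assumes "card A = k" and "0 < k"
  shows "ratio (bin_X X) k A (i, j) 0 = 1 - ratio X k A i j"
proof -
  have "finite A" using assms card_ge_0_finite by blast
  have "{c \<in> A. bin_X X c (i, j) = 0} = A - {c \<in> A. X c i = j}"
    unfolding bin_X_def by auto
  then have "card {c \<in> A. bin_X X c (i, j) = 0} = k - card {c \<in> A. X c i = j}"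
    using \<open>finite A\<close> assms(1) by (simp add: card_Diff_subset)
  moreover have "card {c \<in> A. X c i = j} \<le> k"
    using \<open>finite A\<close> assms(1) card_mono[of A "{c \<in> A. X c i = j}"] by auto
  ultimately show ?thesis
    unfolding ratio_def using assms(2) by (simp add: of_nat_diff diff_divide_distrib)
qed

lemma bin_deviation:
  assumes "card A = k" and "0 < k" and "v < 2"
  shows "\<bar>ratio (bin_X X) k A (i, j) v - bin_pi tgt (i, j) v\<bar> = \<bar>ratio X k A i j - tgt i j\<bar>"
proof -
  consider "v = 0" | "v = 1" using assms(3) by linarith
  then show ?thesis
  proof cases
    case 1
    then show ?thesis by (simp add: bin_pi_def ratio_bin_X_zero[OF assms(1,2)])
  next
    case 2
    then show ?thesis using ratio_bin_X_one[of X k A i j] by (simp add: bin_pi_def)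
  qed
qed

lemma sum_bin_attrs: "(\<Sum>ij\<in>bin_attrs p q. f ij) = (\<Sum>i<p. \<Sum>j<q i. f (i, j))"
  unfolding bin_attrs_def by (simp add: sum.Sigma)

lemma loss_1_bin:
  assumes "card A = k" and "0 < k"
  shows "loss_1 (bin_attrs p q) bin_q (bin_pi tgt) (bin_X X) k A = 2 * loss_1 {..<p} q tgt X k A"
proof -
  have "(\<Sum>v<2. \<bar>ratio (bin_X X) k A (i, j) v - bin_pi tgt (i, j) v\<bar>) = 2 * \<bar>ratio X k A i j - tgt i j\<bar>"
    for i j by (simp add: bin_deviation[OF assms])
  then show ?thesis
    unfolding loss_1_def bin_q_def by (simp add: sum_bin_attrs sum_distrib_left)
qed

lemma loss_1max_bin_eq_loss_1:
  assumes "card A = k" and "0 < k"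
  shows "loss_1max (bin_attrs p q) bin_q (bin_pi tgt) (bin_X X) k A = loss_1 {..<p} q tgt X k A"
proof -
  have "(\<lambda>v. \<bar>ratio (bin_X X) k A (i, j) v - bin_pi tgt (i, j) v\<bar>) ` {..<2} = {\<bar>ratio X k A i j - tgt i j\<bar>}"
    for i j using bin_deviation[OF assms] by (auto intro!: image_eqI[where x = 0])
  then show ?thesis
    unfolding loss_1max_def loss_1_def bin_q_def by (simp add: sum_bin_attrs)
qed

lemma loss_max_bin:
  assumes "card A = k" and "0 < k"
  shows "loss_max (bin_attrs p q) bin_q (bin_pi tgt) (bin_X X) k A = loss_max {..<p} q tgt X k A"
proof -
  let ?dev = "\<lambda>(i, j). \<bar>ratio X k A i j - tgt i j\<bar>"
  have "(\<lambda>(ij, v). \<bar>ratio (bin_X X) k A ij v - bin_pi tgt ij v\<bar>) ` (SIGMA ij:bin_attrs p q. {..<bin_q ij})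
      = (\<lambda>(ij, v). ?dev ij) ` (bin_attrs p q \<times> {..<2::nat})"
    unfolding bin_q_def by (rule image_cong[OF refl]) (auto simp: bin_deviation[OF assms])
  also have "\<dots> = ?dev ` bin_attrs p q"
    by (rule image_case_prod_times[of "0::nat"]) simp
  finally show ?thesis
    unfolding loss_max_def bin_attrs_def[symmetric] by (rule arg_cong)
qed

lemma loss_1max_nonneg:
  assumes "\<And>i. i \<in> I \<Longrightarrow> 0 < q i"
  shows "0 \<le> loss_1max I q tgt X k A"
  unfolding loss_1max_def using assms by (intro sum_nonneg Max_abs_image_nonneg)

lemma loss_1max_le_loss_1:
  assumes "\<And>i. i \<in> I \<Longrightarrow> 0 < q i"
  shows "loss_1max I q tgt X k A \<le> loss_1 I q tgt X k A"
  unfolding loss_1max_def loss_1_def using assms by (intro sum_mono Max_abs_image_le_sum)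

lemma loss_1_le_loss_1max:
  assumes "\<And>i. i \<in> I \<Longrightarrow> 0 < q i" and "\<And>i. i \<in> I \<Longrightarrow> q i \<le> m"
  shows "loss_1 I q tgt X k A \<le> real m * loss_1max I q tgt X k A"
  unfolding loss_1max_def loss_1_def sum_distrib_left
  using assms by (intro sum_mono sum_abs_le_mul_Max)

theorem lemma1:
  fixes p :: nat and q :: "nat \<Rightarrow> nat" and C :: "'c set" and X :: "'c \<Rightarrow> nat \<Rightarrow> nat"
    and tgt :: "nat \<Rightarrow> nat \<Rightarrow> real" and k :: nat and A :: "'c set"
  assumes "finite C"
    and "\<And>c i. c \<in> C \<Longrightarrow> i < p \<Longrightarrow> X c i < q i"
    and "\<And>i j. i < p \<Longrightarrow> j < q i \<Longrightarrow> tgt i j \<ge> 0"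
    and "\<And>i. i < p \<Longrightarrow> (\<Sum>j<q i. tgt i j) = 1"
    and "1 \<le> k" and "k \<le> card C"
    and "A \<subseteq> C" and "card A = k"
  shows "loss_1 (bin_attrs p q) bin_q (bin_pi tgt) (bin_X X) k A = 2 * loss_1 {..<p} q tgt X k A
     \<and> (loss_1max {..<p} q tgt X k A \<noteq> 0 \<longrightarrow>
          1 \<le> loss_1max (bin_attrs p q) bin_q (bin_pi tgt) (bin_X X) k A / loss_1max {..<p} q tgt X k A
        \<and> loss_1max (bin_attrs p q) bin_q (bin_pi tgt) (bin_X X) k A / loss_1max {..<p} q tgt X k A
            \<le> real (Max (q ` {..<p})))
     \<and> loss_max (bin_attrs p q) bin_q (bin_pi tgt) (bin_X X) k A = loss_max {..<p} q tgt X k A"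
proof -
  have k: "card A = k" "0 < k" using assms(5,8) by simp_all
  have q_pos: "0 < q i" if "i \<in> {..<p}" for i
    using assms(4)[of i] that by (cases "q i") auto
  let ?L = "loss_1 {..<p} q tgt X k A" and ?M = "loss_1max {..<p} q tgt X k A"
  have "0 \<le> ?M"
    using q_pos by (rule loss_1max_nonneg)
  moreover have "?M \<le> ?L"
    using q_pos by (rule loss_1max_le_loss_1)
  moreover have "?L \<le> real (Max (q ` {..<p})) * ?M"
    using q_pos by (rule loss_1_le_loss_1max) (auto intro: Max_ge)
  ultimately have "?M \<noteq> 0 \<longrightarrow> 1 \<le> ?L / ?M \<and> ?L / ?M \<le> real (Max (q ` {..<p}))"
    by (simp add: pos_le_divide_eq pos_divide_le_eq)
  then show ?thesis
    using loss_1_bin[OF k] loss_1max_bin_eq_loss_1[OF k] loss_max_bin[OF k] by simp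
qed

end
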